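(* Let $Z_3(X)=\phi_3X^3+\phi_2X^2+\phi_1X+\phi_0$ be a real polynomial of degree $3$ with $\phi_3>0$ all of whose roots have strictly negative real part, and let $Z_4(X)=\varphi_4X^4+\varphi_3X^3+\varphi_2X^2+\varphi_1X+\varphi_0$ be a real polynomial of degree $4$ with $\varphi_4>0$. Then there exists $\psi_0$ such that for every $\psi>\psi_0$, all roots of the polynomial $Z_4(X)+\psi Z_3(X)$ have strictly negative real part.
   Context: A polynomial is called stable if all its (complex) roots have strictly negative real part. *)

theory Defs
  imports "HOL-Analysis.Analysis" "HOL-Computational_Algebra.Polynomial"
begin

definition stable :: "real poly \<Rightarrow> bool" where
  "stable p \<longleftrightarrow> (\<forall>z::complex. poly (map_poly complex_of_real p) z = 0 \<longrightarrow> Re z < 0)"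

end

theory Submission
  imports Defs "HOL-Computational_Algebra.Fundamental_Theorem_Algebra"
begin

text \<open>Write \<open>Z\<^sub>4 = a X Z\<^sub>3 + S\<close> with \<open>a = lc Z\<^sub>4 / lc Z\<^sub>3 > 0\<close> and \<open>deg S \<le> 3\<close>, so that
  \<open>Z\<^sub>4 + \<psi> Z\<^sub>3 = (\<psi> + a X) Z\<^sub>3 + S\<close>. On the closed right half-plane \<open>Re z \<ge> 0\<close> we have
  \<open>|\<psi> + a z| \<ge> \<psi>\<close>; since all roots of \<open>Z\<^sub>3\<close> lie strictly to the left, \<open>|Z\<^sub>3(z)| \<ge> m (1 + |z|)\<^sup>3\<close>
  for some \<open>m > 0\<close>, whereas \<open>|S(z)| \<le> C (1 + |z|)\<^sup>3\<close>. Hence for \<open>\<psi> > C / m\<close> the first summand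
  dominates and \<open>Z\<^sub>4 + \<psi> Z\<^sub>3\<close> has no root with \<open>Re z \<ge> 0\<close>.\<close>

lemma degree_sub_leading_term_le:
  fixes p q :: "'a::field poly"
  assumes "p \<noteq> 0" and "degree q = degree p + 1"
  shows "degree (q - pCons 0 (smult (lead_coeff q / lead_coeff p) p)) \<le> degree p"
proof (rule degree_le, intro allI impI)
  fix i assume "degree p < i"
  then consider "i = degree q" | "degree q < i" using assms(2) by linarith
  then show "coeff (q - pCons 0 (smult (lead_coeff q / lead_coeff p) p)) i = 0"
  proof cases
    case 1
    then show ?thesis using assms by (simp add: coeff_pCons)
  next
    case 2
    then show ?thesis using assms
      by (auto simp: coeff_pCons coeff_eq_0 split: nat.split)
  qed
qed

lemma norm_poly_le_sum_norm_coeff_mult_power: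
  fixes p :: "'a::real_normed_field poly"
  assumes "degree p \<le> n"
  shows "norm (poly p z) \<le> (\<Sum>i\<le>degree p. norm (coeff p i)) * (1 + norm z) ^ n"
proof -
  have "norm (poly p z) \<le> (\<Sum>i\<le>degree p. norm (coeff p i * z ^ i))"
    unfolding poly_altdef by (rule norm_sum)
  also have "\<dots> \<le> (\<Sum>i\<le>degree p. norm (coeff p i) * (1 + norm z) ^ n)"
  proof (rule sum_mono)
    fix i assume "i \<in> {..degree p}"
    then have "i \<le> n" using assms by simp
    have "norm z ^ i \<le> (1 + norm z) ^ i" by (rule power_mono) auto
    also have "\<dots> \<le> (1 + norm z) ^ n" using \<open>i \<le> n\<close> by (intro power_increasing) auto
    finally show "norm (coeff p i * z ^ i) \<le> norm (coeff p i) * (1 + norm z) ^ n"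
      by (simp add: norm_mult norm_power mult_left_mono)
  qed
  finally show ?thesis by (simp add: sum_distrib_right)
qed

lemma norm_diff_ge_right_half_plane:
  fixes w z :: complex
  assumes "Re w < 0" and "0 \<le> Re z"
  shows "- Re w / (1 + norm w - Re w) * (1 + norm z) \<le> norm (z - w)"
proof -
  have "- Re w \<le> norm (z - w)"
    using assms complex_Re_le_cmod[of "z - w"] by simp
  moreover have "norm z - norm w \<le> norm (z - w)"
    by (rule norm_triangle_ineq2)
  ultimately have "0 \<le> (1 + norm w) * (norm (z - w) + Re w)"
    and "0 \<le> - Re w * (norm (z - w) - (norm z - norm w))"
    using assms(1) by (simp, intro mult_nonneg_nonneg) simp_all
  then have "- Re w * (1 + norm z) \<le> (1 + norm w - Re w) * norm (z - w)"
    by (simp add: algebra_simps)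
  moreover have "0 < 1 + norm w - Re w" using assms(1) by (smt (verit) norm_ge_zero)
  ultimately show ?thesis by (simp add: field_simps)
qed

lemma poly_lower_bound_right_half_plane:
  fixes p :: "complex poly"
  assumes "p \<noteq> 0" and roots_left: "\<And>z. poly p z = 0 \<Longrightarrow> Re z < 0"
  obtains m where "m > 0" and "\<And>z. 0 \<le> Re z \<Longrightarrow> m * (1 + norm z) ^ degree p \<le> norm (poly p z)"
proof -
  obtain root where decomp: "smult (lead_coeff p) (\<Prod>i<degree p. [:-root i, 1:]) = p"
    using complex_poly_decompose' by blast
  have poly_p: "poly p z = lead_coeff p * (\<Prod>i<degree p. z - root i)" for z
  proof -
    have "poly p z = poly (smult (lead_coeff p) (\<Prod>i<degree p. [:-root i, 1:])) z"
      using decomp by simp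
    then show ?thesis by (simp add: poly_prod)
  qed
  have Re_root: "Re (root i) < 0" if "i < degree p" for i
    using that by (intro roots_left) (auto simp: poly_p)
  define c where "c w = - Re w / (1 + norm w - Re w)" for w :: complex
  have c_pos: "c (root i) > 0" if "i < degree p" for i
    using Re_root[OF that] unfolding c_def by (smt (verit) divide_pos_pos norm_ge_zero)
  show ?thesis
  proof
    show "0 < norm (lead_coeff p) * (\<Prod>i<degree p. c (root i))"
      using assms(1) c_pos by (intro mult_pos_pos prod_pos) auto
  next
    fix z :: complex assume "0 \<le> Re z"
    have "c (root i) * (1 + norm z) \<le> norm (z - root i)" if "i < degree p" for i
      unfolding c_def using norm_diff_ge_right_half_plane[OF Re_root[OF that] \<open>0 \<le> Re z\<close>] .
    then have "(\<Prod>i<degree p. c (root i) * (1 + norm z)) \<le> (\<Prod>i<degree p. norm (z - root i))"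
      using c_pos by (intro prod_mono conjI) (simp_all add: less_imp_le)
    then show "norm (lead_coeff p) * (\<Prod>i<degree p. c (root i)) * (1 + norm z) ^ degree p
        \<le> norm (poly p z)"
      by (simp add: poly_p norm_mult prod_norm prod.distrib mult_left_mono mult.assoc)
  qed
qed

lemma poly_of_real_add_smult:
  "poly (map_poly complex_of_real (p + smult c q)) z =
   poly (map_poly complex_of_real p) z + complex_of_real c * poly (map_poly complex_of_real q) z"
proof -
  have "map_poly complex_of_real (p + smult c q) =
        map_poly complex_of_real p + smult (complex_of_real c) (map_poly complex_of_real q)"
    by (intro poly_eqI) (simp add: coeff_map_poly)
  then show ?thesis by simp
qed

lemma dominated_perturbation_nonzero_right_half_plane:
  fixes z w s :: complex and a \<psi> m C :: real
  assumes "0 \<le> Re z" and "0 \<le> a" and "0 \<le> m" and "C < \<psi> * m"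
    and "m * (1 + norm z) ^ n \<le> norm w" and "norm s \<le> C * (1 + norm z) ^ n"
  shows "(\<psi> + a * z) * w + s \<noteq> 0"
proof
  assume "(\<psi> + a * z) * w + s = 0"
  then have "norm (\<psi> + a * z) * norm w = norm s"
    unfolding add_eq_0_iff2 by (metis norm_minus_cancel norm_mult)
  have "\<psi> \<le> Re (\<psi> + a * z)"
    using assms(1,2) by simp
  also have "\<dots> \<le> norm (\<psi> + a * z)" by (rule complex_Re_le_cmod)
  finally have "\<psi> \<le> norm (\<psi> + a * z)" .
  have "C * (1 + norm z) ^ n < \<psi> * m * (1 + norm z) ^ n"
    using assms(4) by (intro mult_strict_right_mono) (simp_all add: add_pos_nonneg)
  also have "\<dots> = \<psi> * (m * (1 + norm z) ^ n)" by simp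
  also have "\<dots> \<le> norm (\<psi> + a * z) * norm w"
    using \<open>\<psi> \<le> norm (\<psi> + a * z)\<close> assms(3,5) by (intro mult_mono) auto
  also have "\<dots> = norm s" by fact
  finally show False using assms(6) by simp
qed

lemma eventually_stable_add_smult:
  fixes p q :: "real poly"
  assumes "stable p" and "lead_coeff p > 0"
    and "degree q = degree p + 1" and "lead_coeff q > 0"
  shows "\<forall>\<^sub>F \<psi> in at_top. stable (q + smult \<psi> p)"
proof -
  define P Q where "P = map_poly complex_of_real p" and "Q = map_poly complex_of_real q"
  define a where "a = lead_coeff q / lead_coeff p"
  have "P \<noteq> 0" "degree Q = degree P + 1"
    using assms(2-4) by (auto simp: P_def Q_def degree_map_poly map_poly_eq_0_iff)
  have "lead_coeff Q / lead_coeff P = complex_of_real a"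
    using assms(2,4) unfolding P_def Q_def a_def
    by (subst (1 2) lead_coeff_map_poly_nz) auto
  define S where "S = Q - pCons 0 (smult (complex_of_real a) P)"
  have "degree S \<le> degree P"
    unfolding S_def using degree_sub_leading_term_le[OF \<open>P \<noteq> 0\<close> \<open>degree Q = degree P + 1\<close>]
    by (simp add: \<open>lead_coeff Q / lead_coeff P = complex_of_real a\<close>)
  define C where "C = (\<Sum>i\<le>degree S. norm (coeff S i))"
  have S_upper: "norm (poly S z) \<le> C * (1 + norm z) ^ degree P" for z
    unfolding C_def by (rule norm_poly_le_sum_norm_coeff_mult_power) fact
  obtain m where "m > 0"
    and P_lower: "\<And>z. 0 \<le> Re z \<Longrightarrow> m * (1 + norm z) ^ degree P \<le> norm (poly P z)"
    using poly_lower_bound_right_half_plane[OF \<open>P \<noteq> 0\<close>] \<open>stable p\<close>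
    unfolding stable_def P_def by blast
  show ?thesis
  proof (rule eventually_mono[OF eventually_gt_at_top[of "C / m"]])
    fix \<psi> :: real assume "C / m < \<psi>"
    then have "C < \<psi> * m" using \<open>m > 0\<close> by (simp add: field_simps)
    have "poly (map_poly complex_of_real (q + smult \<psi> p)) z = (\<psi> + a * z) * poly P z + poly S z"
      for z :: complex by (simp add: poly_of_real_add_smult S_def P_def Q_def algebra_simps)
    moreover have "(\<psi> + a * z) * poly P z + poly S z \<noteq> 0" if "0 \<le> Re z" for z :: complex
      using \<open>m > 0\<close> \<open>C < \<psi> * m\<close> P_lower[OF that] S_upper that assms(2,4)
      by (intro dominated_perturbation_nonzero_right_half_plane) (simp_all add: a_def)
    ultimately show "stable (q + smult \<psi> p)"
      unfolding stable_def by (metis not_le)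
  qed
qed

theorem lemma1:
  fixes Z3 Z4 :: "real poly"
  assumes "degree Z3 = 3" and "lead_coeff Z3 > 0" and "stable Z3"
    and "degree Z4 = 4" and "lead_coeff Z4 > 0"
  shows "\<exists>\<psi>0::real. \<forall>\<psi>::real. \<psi> > \<psi>0 \<longrightarrow> stable (Z4 + smult \<psi> Z3)"
proof -
  have "\<forall>\<^sub>F \<psi> in at_top. stable (Z4 + smult \<psi> Z3)"
    using assms by (intro eventually_stable_add_smult) simp_all
  then obtain \<psi>0 where "\<forall>\<psi>\<ge>\<psi>0. stable (Z4 + smult \<psi> Z3)"
    by (auto simp: eventually_at_top_linorder)
  then show ?thesis by (auto intro: less_imp_le)
qed

end
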